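(* Let $N\ge1$, let $\Psi_N$ be the $N\times N$ lower triangular matrix $(\Psi_N)_{jk}=\binom{j}{k}$, $0\le j,k<N$, let $\Lambda_N=\mathrm{diag}(1,-1,1,\dots,(-1)^{N-1})$, and let $J_N$ be the $N\times N$ symmetric tridiagonal matrix with $(J_N)_{kk}=k(2k^2+3k+2-N^2)$ and $(J_N)_{k,k+1}=(J_N)_{k+1,k}=(k+1)(N^2-(k+1)^2)$. Set $B_N=-\Lambda_NJ_N\Lambda_N+(N^2-1)I_N$ and $S_N=\Psi_N^\intercal\Psi_N$, i.e. $(S_N)_{jk}=\sum_{i=0}^{N-1}\binom{i}{j}\binom{i}{k}$. Then $B_NS_N=S_NB_N$.
   Context: Matrix indices start at $0$; $I_N$ is the $N\times N$ identity matrix. *)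

theory Defs
  imports "Jordan_Normal_Form.Matrix"
begin

definition Psi :: "nat \<Rightarrow> int mat" where
  "Psi N = mat N N (\<lambda>(j,k). int (j choose k))"

definition Lambda :: "nat \<Rightarrow> int mat" where
  "Lambda N = mat N N (\<lambda>(j,k). if j = k then (-1) ^ j else 0)"

definition Jmat :: "nat \<Rightarrow> int mat" where
  "Jmat N = mat N N (\<lambda>(j,k).
     if j = k then int k * (2 * int k ^ 2 + 3 * int k + 2 - int N ^ 2)
     else if k = j + 1 then int (j+1) * (int N ^ 2 - int (j+1) ^ 2)
     else if j = k + 1 then int (k+1) * (int N ^ 2 - int (k+1) ^ 2)
     else 0)"

definition Bmat :: "nat \<Rightarrow> int mat" where
  "Bmat N = - (Lambda N * Jmat N * Lambda N) + of_int (int N ^ 2 - 1) \<cdot>\<^sub>m 1\<^sub>m N"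

definition Smat :: "nat \<Rightarrow> int mat" where
  "Smat N = (Psi N)\<^sup>T * Psi N"

end

theory Submission
  imports Defs
begin

text \<open>Both \<open>B\<^sub>N\<close> and \<open>J\<^sub>N\<close> are symmetric tridiagonal with the same off-diagonal entries, and
  \<open>\<Psi>\<^sub>N\<close> intertwines them: \<open>\<Psi>\<^sub>N B\<^sub>N = J\<^sub>N \<Psi>\<^sub>N\<close>. Entrywise this is a three-term identity
  between binomial coefficients, which follows from Pascal's rule and the absorption identities.
  Transposing gives \<open>B\<^sub>N \<Psi>\<^sub>N\<^sup>T = \<Psi>\<^sub>N\<^sup>T J\<^sub>N\<close>, so
  \<open>B\<^sub>N S\<^sub>N = \<Psi>\<^sub>N\<^sup>T J\<^sub>N \<Psi>\<^sub>N = S\<^sub>N B\<^sub>N\<close>.\<close>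

lemma commute_gram_if_intertwines:
  fixes P B J :: "'a::comm_ring_1 mat"
  assumes P: "P \<in> carrier_mat n n" and B: "B \<in> carrier_mat n n" and J: "J \<in> carrier_mat n n"
    and B_sym: "transpose_mat B = B" and J_sym: "transpose_mat J = J"
    and intertwine: "P * B = J * P"
  shows "B * (transpose_mat P * P) = (transpose_mat P * P) * B"
proof -
  have "B * transpose_mat P = transpose_mat (P * B)"
    using transpose_mult[OF P B] B_sym by simp
  also have "\<dots> = transpose_mat P * J"
    using transpose_mult[OF J P] J_sym intertwine by simp
  finally have "B * (transpose_mat P * P) = transpose_mat P * J * P"
    using P B by (metis assoc_mult_mat transpose_carrier_mat)
  also have "\<dots> = transpose_mat P * (P * B)"
    using P J by (simp add: intertwine)
  finally show ?thesis
    using P B by simp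
qed

definition sym_tridiag :: "nat \<Rightarrow> (nat \<Rightarrow> 'a) \<Rightarrow> (nat \<Rightarrow> 'a) \<Rightarrow> 'a::zero mat" where
  "sym_tridiag n d a = mat n n (\<lambda>(j, k).
     if j = k then d k else if k = j + 1 then a k else if j = k + 1 then a j else 0)"

lemma sym_tridiag_carrier [simp]: "sym_tridiag n d a \<in> carrier_mat n n"
  and dim_row_sym_tridiag [simp]: "dim_row (sym_tridiag n d a) = n"
  and dim_col_sym_tridiag [simp]: "dim_col (sym_tridiag n d a) = n"
  by (simp_all add: sym_tridiag_def)

lemma transpose_sym_tridiag [simp]: "transpose_mat (sym_tridiag n d a) = sym_tridiag n d a"
  by (rule eq_matI) (auto simp: sym_tridiag_def)

text \<open>Since \<open>a 0 = 0\<close> and \<open>a n = 0\<close>, the boundary terms need no guards: they are multiplied by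
  zero whatever junk value \<open>f\<close> takes at \<open>k + 1 = n\<close> or at the truncated index \<open>0 - 1 = 0\<close>.\<close>

lemma sym_tridiag_mult_index:
  fixes f :: "nat \<times> nat \<Rightarrow> 'a::comm_ring_1"
  assumes "a 0 = 0" "a n = 0" "i < n" "k < n"
  shows "(sym_tridiag n d a * mat n n f) $$ (i, k)
    = d i * f (i, k) + a (i + 1) * f (i + 1, k) + a i * f (i - 1, k)"
proof -
  have "(sym_tridiag n d a * mat n n f) $$ (i, k)
      = (\<Sum>l<n. (if l = i then d i * f (l, k) else 0) + (if l = i + 1 then a (i + 1) * f (l, k) else 0)
          + (if i = l + 1 then a i * f (l, k) else 0))"
    using assms(3,4) by (auto simp: sym_tridiag_def scalar_prod_def lessThan_atLeast0 intro!: sum.cong)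
  also have "\<dots> = d i * f (i, k) + a (i + 1) * f (i + 1, k) + a i * f (i - 1, k)"
  proof -
    have "i + 1 < n \<or> a (i + 1) = 0"
      using assms(2,3) by (cases "i + 1 = n") auto
    then show ?thesis
      using assms(1,3) by (cases i) (auto simp: sum.distrib sum.delta)
  qed
  finally show ?thesis .
qed

lemma mult_sym_tridiag_index:
  fixes f :: "nat \<times> nat \<Rightarrow> 'a::comm_ring_1"
  assumes "a 0 = 0" "a n = 0" "i < n" "k < n"
  shows "(mat n n f * sym_tridiag n d a) $$ (i, k)
    = f (i, k) * d k + f (i, k + 1) * a (k + 1) + f (i, k - 1) * a k"
proof -
  have "transpose_mat (mat n n f) = mat n n (\<lambda>(j, l). f (l, j))"
    by (rule eq_matI) auto
  then have "transpose_mat (mat n n f * sym_tridiag n d a) = sym_tridiag n d a * mat n n (\<lambda>(j, l). f (l, j))"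
    using transpose_mult[of "mat n n f" n n "sym_tridiag n d a" n] by simp
  moreover have "(mat n n f * sym_tridiag n d a) $$ (i, k) = transpose_mat (mat n n f * sym_tridiag n d a) $$ (k, i)"
    using assms(3,4) by (simp add: sym_tridiag_def)
  ultimately have "(mat n n f * sym_tridiag n d a) $$ (i, k) = (sym_tridiag n d a * mat n n (\<lambda>(j, l). f (l, j))) $$ (k, i)"
    by simp
  then show ?thesis
    using sym_tridiag_mult_index[OF assms(1,2,4,3)] by (simp add: mult.commute)
qed

definition jacobi_diag :: "nat \<Rightarrow> nat \<Rightarrow> int" where
  "jacobi_diag N k = int k * (2 * int k ^ 2 + 3 * int k + 2 - int N ^ 2)"

definition jacobi_off :: "nat \<Rightarrow> nat \<Rightarrow> int" where
  "jacobi_off N m = int m * (int N ^ 2 - int m ^ 2)"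

lemma jacobi_off_0 [simp]: "jacobi_off N 0 = 0"
  and jacobi_off_N [simp]: "jacobi_off N N = 0"
  by (simp_all add: jacobi_off_def)

lemma Jmat_eq_sym_tridiag: "Jmat N = sym_tridiag N (jacobi_diag N) (jacobi_off N)"
  by (rule eq_matI) (auto simp: Jmat_def sym_tridiag_def jacobi_diag_def jacobi_off_def)

lemma Bmat_eq_sym_tridiag:
  "Bmat N = sym_tridiag N (\<lambda>k. int N ^ 2 - 1 - jacobi_diag N k) (jacobi_off N)"
proof -
  have Lambda: "Lambda N = mat_diag N (\<lambda>j. (-1) ^ j)"
    by (auto simp: Lambda_def mat_diag_def intro!: eq_matI)
  have "Jmat N \<in> carrier_mat N N"
    by (simp add: Jmat_eq_sym_tridiag)
  then have "Lambda N * Jmat N = mat N N (\<lambda>(j, k). (-1) ^ j * Jmat N $$ (j, k))"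
    by (simp add: Lambda mat_diag_mult_left)
  then have "Lambda N * Jmat N * Lambda N = mat N N (\<lambda>(j, k). (-1) ^ j * Jmat N $$ (j, k) * (-1) ^ k)"
    unfolding Lambda by (subst mat_diag_mult_right[of _ N N]) (auto intro!: eq_matI)
  then show ?thesis
    by (auto simp: Bmat_def Jmat_eq_sym_tridiag sym_tridiag_def intro!: eq_matI)
qed

lemma of_nat_Suc_mult_binomial_Suc:
  "of_nat (Suc k) * of_nat (j choose Suc k) = (of_nat j - of_nat k) * (of_nat (j choose k) :: 'a::comm_ring_1)"
proof (cases "k \<le> j")
  case True
  have "Suc k * (j choose Suc k) = (j - k) * (j choose k)"
    by (metis binomial_absorption binomial_absorb_comp)
  then show ?thesis
    using True by (metis of_nat_diff of_nat_mult)
qed (simp add: binomial_eq_0)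

lemma of_nat_mult_binomial_pred:
  "of_nat j * of_nat ((j - 1) choose k) = (of_nat j - of_nat k) * (of_nat (j choose k) :: 'a::comm_ring_1)"
proof (cases "k \<le> j")
  case True
  have "j * ((j - 1) choose k) = (j - k) * (j choose k)"
    by (metis binomial_absorb_comp)
  then show ?thesis
    using True by (metis of_nat_diff of_nat_mult)
qed (simp add: binomial_eq_0)

lemma intertwining_polynomial_identity:
  fixes j k n u v w x y :: "'a::comm_ring_1"
  assumes "(k + 1) * w = (j - k) * v" "j * x = (j - k) * v" "y = v + u" "k * v = (j + 1 - k) * u"
  shows "v * (n^2 - 1 - k * (2*k^2 + 3*k + 2 - n^2)) + w * ((k + 1) * (n^2 - (k + 1)^2)) + u * (k * (n^2 - k^2))
    = j * (2*j^2 + 3*j + 2 - n^2) * v + (j + 1) * (n^2 - (j + 1)^2) * y + j * (n^2 - j^2) * x"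
proof -
  \<comment> \<open>the difference of the two sides is a combination of the four hypotheses\<close>
  have "v * (n^2 - 1 - k * (2*k^2 + 3*k + 2 - n^2)) + w * ((k + 1) * (n^2 - (k + 1)^2)) + u * (k * (n^2 - k^2))
      - (j * (2*j^2 + 3*j + 2 - n^2) * v + (j + 1) * (n^2 - (j + 1)^2) * y + j * (n^2 - j^2) * x)
    = (n^2 - (k + 1)^2) * ((k + 1) * w - (j - k) * v) - (n^2 - j^2) * (j * x - (j - k) * v)
      - (j + 1) * (n^2 - (j + 1)^2) * (y - v - u)
      - ((j + 1)^2 + (j + 1) * k + k^2 - n^2) * (k * v - (j + 1 - k) * u)"
    by (simp add: algebra_simps power2_eq_square power3_eq_cube)
  then show ?thesis
    using assms by simp
qed

lemma binomial_intertwining: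
  fixes N j k :: nat
  shows "int (j choose k) * (int N ^ 2 - 1 - jacobi_diag N k) + int (j choose (k + 1)) * jacobi_off N (k + 1)
      + int (j choose (k - 1)) * jacobi_off N k
    = jacobi_diag N j * int (j choose k) + jacobi_off N (j + 1) * int ((j + 1) choose k)
      + jacobi_off N j * int ((j - 1) choose k)"
proof -
  \<comment> \<open>\<open>u\<close> is \<open>C(j, k - 1)\<close> without the junk value \<open>C(j, 0 - 1) = 1\<close>\<close>
  define u where "u = (if k = 0 then 0 else int (j choose (k - 1)))"
  have "(int k + 1) * int (j choose (k + 1)) = (int j - int k) * int (j choose k)"
    using of_nat_Suc_mult_binomial_Suc[of k j, where 'a = int] by (simp add: add.commute)
  moreover have "int ((j + 1) choose k) = int (j choose k) + u"
    by (cases k) (auto simp: u_def)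
  moreover have "int k * int (j choose k) = (int j + 1 - int k) * u"
    using of_nat_Suc_mult_binomial_Suc[of "k - 1" j, where 'a = int] by (cases k) (auto simp: u_def algebra_simps)
  ultimately have "int (j choose k) * (int N ^ 2 - 1 - int k * (2 * int k ^ 2 + 3 * int k + 2 - int N ^ 2))
      + int (j choose (k + 1)) * ((int k + 1) * (int N ^ 2 - (int k + 1) ^ 2)) + u * (int k * (int N ^ 2 - int k ^ 2))
    = int j * (2 * int j ^ 2 + 3 * int j + 2 - int N ^ 2) * int (j choose k)
      + (int j + 1) * (int N ^ 2 - (int j + 1) ^ 2) * int ((j + 1) choose k)
      + int j * (int N ^ 2 - int j ^ 2) * int ((j - 1) choose k)"
    using intertwining_polynomial_identity of_nat_mult_binomial_pred by blast
  moreover have "int (j choose (k - 1)) * (int k * (int N ^ 2 - int k ^ 2)) = u * (int k * (int N ^ 2 - int k ^ 2))"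
    by (simp add: u_def)
  ultimately show ?thesis
    unfolding jacobi_diag_def jacobi_off_def of_nat_add of_nat_1 by linarith
qed

lemma Psi_mult_Bmat: "Psi N * Bmat N = Jmat N * Psi N"
proof (rule eq_matI)
  fix j k assume "j < dim_row (Jmat N * Psi N)" "k < dim_col (Jmat N * Psi N)"
  then have jk: "j < N" "k < N"
    by (simp_all add: Psi_def Jmat_eq_sym_tridiag)
  show "(Psi N * Bmat N) $$ (j, k) = (Jmat N * Psi N) $$ (j, k)"
    unfolding Psi_def Bmat_eq_sym_tridiag Jmat_eq_sym_tridiag
    by (simp only: mult_sym_tridiag_index[of "jacobi_off N", OF jacobi_off_0 jacobi_off_N jk]
        sym_tridiag_mult_index[of "jacobi_off N", OF jacobi_off_0 jacobi_off_N jk] prod.case binomial_intertwining)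
qed (simp_all add: Psi_def Bmat_eq_sym_tridiag Jmat_eq_sym_tridiag)

theorem mainTheorem7:
  fixes N :: nat
  assumes "N \<ge> 1"
  shows "Bmat N * Smat N = Smat N * Bmat N"
  unfolding Smat_def
proof (rule commute_gram_if_intertwines[where n = N])
  show "Psi N * Bmat N = Jmat N * Psi N"
    by (rule Psi_mult_Bmat)
qed (simp_all add: Psi_def Bmat_eq_sym_tridiag Jmat_eq_sym_tridiag)

end
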